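(* Fix a prime $q\ge3$. Let $T_1,T_2,T_3\subseteq\mathbb{F}_q$ be arbitrary sets of size $\ell>0$, and let $X_1,X_2$ be independent with $X_1$ uniform on $T_1$ and $X_2$ uniform on $T_2$. Then $$\Pr[X_1+X_2\in T_3]\le\begin{cases}\frac34+\frac{1}{4\ell^2}+\frac{\max(0,3\ell-2q-1)\cdot(3\ell-2q+1)}{4\ell^2}, & \ell\text{ odd},\\ \frac34+\frac{\max(0,3\ell-2q)^2}{4\ell^2}, & \ell\text{ even},\end{cases}$$ and this bound is tight for all $\ell$ (i.e., for every $\ell$ there exist such $T_1,T_2,T_3$ attaining it). In particular: (1) if $\ell\le 2q/3$, then $\Pr[X_1+X_2\in T_3]\le\frac34+\frac{1}{4\ell^2}$ when $\ell$ is odd and $\le\frac34$ when $\ell$ is even; (2) if $2q/3<\ell\le q-1$, then $\Pr[X_1+X_2\in T_3]\le\frac{q^2-3\ell(q-\ell)}{\ell^2}$. *)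

theory Defs
  imports "HOL-Probability.Probability" "HOL-Computational_Algebra.Primes"
begin

text \<open>The field F_q is represented by the residues {0..<q} (q prime), with addition
  (a + b) mod q.\<close>

definition sum_in_prob :: "nat \<Rightarrow> nat set \<Rightarrow> nat set \<Rightarrow> nat set \<Rightarrow> real" where
  "sum_in_prob q T1 T2 T3 =
     measure_pmf.prob (pair_pmf (pmf_of_set T1) (pmf_of_set T2))
       {(x1, x2). (x1 + x2) mod q \<in> T3}"

text \<open>The bound of the lemma (q, l as integers to avoid truncated subtraction).\<close>

definition sumset_bound :: "nat \<Rightarrow> nat \<Rightarrow> real" where
  "sumset_bound q l =
     (let L = int l; Q = int q in
      if odd l then
        3/4 + 1 / (4 * real_of_int (L^2))
          + real_of_int (max 0 (3*L - 2*Q - 1) * (3*L - 2*Q + 1)) / (4 * real_of_int (L^2))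
      else
        3/4 + real_of_int ((max 0 (3*L - 2*Q))^2) / (4 * real_of_int (L^2)))"

end

theory Submission
  imports Defs "HOL-Number_Theory.Cong"
begin

text \<open>Let \<open>r(c)\<close> be the number of pairs \<open>(a, b) \<in> A \<times> B\<close> with \<open>a + b = c\<close> in \<open>\<int>/q\<close>.
  Pollard's theorem says that for prime \<open>q\<close> and \<open>t \<le> min |A| |B|\<close> the capped sum
  \<open>\<Sum>\<^sub>c min (r c) t\<close> is at least \<open>t \<cdot> min q (|A| + |B| - t)\<close>.  Since the capped sum is at most
  \<open>t |C| + \<Sum>\<^sub>c\<^sub>\<notin>\<^sub>C r c\<close>, the number \<open>N\<close> of pairs with \<open>a + b \<in> C\<close> satisfies
  \<open>N + t \<cdot> min q (2l - t) \<le> l\<^sup>2 + t l\<close> when all three sets have size \<open>l\<close>; the choice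
  \<open>t = \<lfloor>l/2\<rfloor>\<close> (if \<open>3l < 2q\<close>) or \<open>t = 2l - q\<close> (otherwise) yields the bound.
  Pollard's theorem is proved by induction on \<open>|B|\<close>: splitting \<open>B\<close> into \<open>B\<^sub>1 = {b. b + e \<in> A}\<close>
  and \<open>B\<^sub>2\<close>, the pairs \<open>(A \<union> (B\<^sub>2 + e), B\<^sub>1)\<close> and \<open>(A - (B\<^sub>1 + e), B\<^sub>2)\<close> share out \<open>r\<close> exactly,
  and primality of \<open>q\<close> provides an \<open>e\<close> for which \<open>B\<^sub>1\<close> is a proper nonempty subset of \<open>B\<close>.
  The bound is attained by \<open>T\<^sub>1 = T\<^sub>2 = {0..<l}\<close> and an interval \<open>T\<^sub>3\<close>: the middle
  \<open>l\<close> sums \<open>{\<lfloor>l/2\<rfloor>..<\<lfloor>l/2\<rfloor> + l}\<close> if \<open>3l < 2q\<close>, and \<open>{q - l..<q}\<close> otherwise.\<close>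

section \<open>Representation counts modulo q\<close>

definition repr_count :: "nat \<Rightarrow> nat set \<Rightarrow> nat set \<Rightarrow> nat \<Rightarrow> nat" where
  "repr_count q A B c = card {(a, b) \<in> A \<times> B. (a + b) mod q = c}"

lemma add_mod_cancel_right:
  fixes q :: nat
  assumes "x < q" "y < q" "(x + e) mod q = (y + e) mod q"
  shows "x = y"
  using assms by (metis cong_def cong_add_rcancel_nat mod_less)

lemma inj_on_add_mod: "inj_on (\<lambda>x. (x + e) mod q) {..<q::nat}"
  by (auto intro: inj_onI add_mod_cancel_right)

lemma card_image_add_mod: "B \<subseteq> {..<q::nat} \<Longrightarrow> card ((\<lambda>x. (x + e) mod q) ` B) = card B"
  by (auto intro: card_image inj_on_subset[OF inj_on_add_mod])

lemma inj_on_snd_repr: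
  "A \<subseteq> {..<q} \<Longrightarrow> inj_on snd {(a, b) \<in> A \<times> B. (a + b) mod q = (c::nat)}"
  by (auto simp: inj_on_def) (metis add_mod_cancel_right lessThan_iff subsetD)

lemma repr_count_le_card_right:
  assumes "A \<subseteq> {..<q}" "finite B"
  shows "repr_count q A B c \<le> card B"
proof -
  have "repr_count q A B c = card (snd ` {(a, b) \<in> A \<times> B. (a + b) mod q = c})"
    unfolding repr_count_def using inj_on_snd_repr[OF assms(1)] by (simp add: card_image)
  also have "\<dots> \<le> card B"
    using assms(2) by (intro card_mono) auto
  finally show ?thesis .
qed

lemma repr_count_full_left:
  assumes "B \<subseteq> {..<q}" "c < q"
  shows "repr_count q {..<q} B c = card B"
proof -
  let ?F = "{(a, b) \<in> {..<q} \<times> B. (a + b) mod q = c}"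
  have "B \<subseteq> snd ` ?F"
  proof
    fix b assume "b \<in> B"
    moreover have "((c + q - b) mod q + b) mod q = c"
      unfolding mod_add_left_eq using assms \<open>b \<in> B\<close> by auto
    ultimately have "((c + q - b) mod q, b) \<in> ?F"
      using assms by simp
    then show "b \<in> snd ` ?F"
      by force
  qed
  then have "snd ` ?F = B"
    by auto
  moreover have "card (snd ` ?F) = card ?F"
    by (rule card_image, rule inj_on_snd_repr) simp
  ultimately show ?thesis
    unfolding repr_count_def by simp
qed

lemma repr_count_commute: "repr_count q A B c = repr_count q B A c"
proof -
  have "{(a, b) \<in> B \<times> A. (a + b) mod q = c} = prod.swap ` {(a, b) \<in> A \<times> B. (a + b) mod q = c}"
    by (auto simp: add.commute)
  then show ?thesis
    unfolding repr_count_def by (simp add: card_image)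
qed

lemma repr_count_Un_left:
  assumes "finite X" "finite Y" "finite B" "X \<inter> Y = {}"
  shows "repr_count q (X \<union> Y) B c = repr_count q X B c + repr_count q Y B c"
proof -
  have "{(a, b) \<in> (X \<union> Y) \<times> B. (a + b) mod q = c}
      = {(a, b) \<in> X \<times> B. (a + b) mod q = c} \<union> {(a, b) \<in> Y \<times> B. (a + b) mod q = c}"
    by auto
  then show ?thesis
    unfolding repr_count_def using assms
    by (subst card_Un_disjoint[symmetric]) (auto intro: finite_subset[of _ "X \<times> B"] finite_subset[of _ "Y \<times> B"])
qed

lemma repr_count_image_add_mod_left:
  assumes "X \<subseteq> {..<q}"
  shows "repr_count q ((\<lambda>x. (x + e) mod q) ` X) Y c = card {(x, y) \<in> X \<times> Y. (x + y + e) mod q = c}"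
proof -
  let ?f = "\<lambda>(x, y). ((x + e) mod q, y)"
  have sum: "((x + e) mod q + y) mod q = (x + y + e) mod q" for x y
    unfolding mod_add_left_eq by (simp add: ac_simps)
  have "{(a, b) \<in> (\<lambda>x. (x + e) mod q) ` X \<times> Y. (a + b) mod q = c}
      = ?f ` {(x, y) \<in> X \<times> Y. (x + y + e) mod q = c}"
    by (auto simp: sum image_iff)
  moreover have "inj_on ?f (X \<times> Y)"
    using inj_on_subset[OF inj_on_add_mod assms] by (auto simp: inj_on_def)
  then have "inj_on ?f {(x, y) \<in> X \<times> Y. (x + y + e) mod q = c}"
    by (rule inj_on_subset) auto
  ultimately show ?thesis
    unfolding repr_count_def by (simp add: card_image)
qed

lemma repr_count_image_add_mod_swap:
  assumes "X \<subseteq> {..<q}" "Y \<subseteq> {..<q}"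
  shows "repr_count q ((\<lambda>x. (x + e) mod q) ` X) Y c = repr_count q ((\<lambda>y. (y + e) mod q) ` Y) X c"
proof -
  have "{(y, x) \<in> Y \<times> X. (y + x + e) mod q = c} = prod.swap ` {(x, y) \<in> X \<times> Y. (x + y + e) mod q = c}"
    by (auto simp: ac_simps)
  then have "card {(y, x) \<in> Y \<times> X. (y + x + e) mod q = c} = card {(x, y) \<in> X \<times> Y. (x + y + e) mod q = c}"
    by (simp add: card_image)
  then show ?thesis
    using repr_count_image_add_mod_left assms by simp
qed

definition sum_hits :: "nat \<Rightarrow> nat set \<Rightarrow> nat set \<Rightarrow> nat set \<Rightarrow> nat" where
  "sum_hits q A B C = card {(a, b) \<in> A \<times> B. (a + b) mod q \<in> C}"

lemma sum_hits_eq_sum_repr_count: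
  assumes "finite A" "finite B" "finite C"
  shows "sum_hits q A B C = (\<Sum>c\<in>C. repr_count q A B c)"
proof -
  have "{(a, b) \<in> A \<times> B. (a + b) mod q \<in> C} = (\<Union>c\<in>C. {(a, b) \<in> A \<times> B. (a + b) mod q = c})"
    by auto
  then have "sum_hits q A B C = card (\<Union>c\<in>C. {(a, b) \<in> A \<times> B. (a + b) mod q = c})"
    unfolding sum_hits_def by simp
  also have "\<dots> = (\<Sum>c\<in>C. repr_count q A B c)"
    unfolding repr_count_def
    by (rule card_UN_disjoint) (use assms in \<open>auto intro: finite_subset[of _ "A \<times> B"]\<close>)
  finally show ?thesis .
qed

lemma sum_repr_count:
  assumes "0 < q" "finite A" "finite B"
  shows "(\<Sum>c<q. repr_count q A B c) = card A * card B"
proof -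
  have "{(a, b) \<in> A \<times> B. (a + b) mod q \<in> {..<q}} = A \<times> B"
    using assms(1) by auto
  then show ?thesis
    using sum_hits_eq_sum_repr_count[of A B "{..<q}" q] assms
    by (simp add: sum_hits_def card_cartesian_product)
qed

lemma sum_hits_add_compl:
  assumes "0 < q" "finite A" "finite B" "C \<subseteq> {..<q}"
  shows "sum_hits q A B C + (\<Sum>c\<in>{..<q} - C. repr_count q A B c) = card A * card B"
  using assms sum.subset_diff[OF assms(4)] sum_repr_count sum_hits_eq_sum_repr_count
  by (metis add.commute finite_lessThan finite_subset)

section \<open>Pollard's theorem\<close>

lemma repr_count_e_transform:
  fixes q e :: nat
  assumes A: "A \<subseteq> {..<q}" and B: "B \<subseteq> {..<q}"
  defines "\<sigma> \<equiv> \<lambda>x. (x + e) mod q"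
  defines "B1 \<equiv> {b \<in> B. \<sigma> b \<in> A}" and "B2 \<equiv> {b \<in> B. \<sigma> b \<notin> A}"
  shows "repr_count q (A \<union> \<sigma> ` B2) B1 c + repr_count q (A - \<sigma> ` B1) B2 c = repr_count q A B c"
proof -
  have finA: "finite A" and finB: "finite B"
    using A B finite_subset by blast+
  then have fin: "finite B1" "finite B2"
    unfolding B1_def B2_def by auto
  have "repr_count q (A \<union> \<sigma> ` B2) B1 c = repr_count q A B1 c + repr_count q (\<sigma> ` B2) B1 c"
    using finA fin by (intro repr_count_Un_left) (auto simp: B2_def)
  also have "repr_count q (\<sigma> ` B2) B1 c = repr_count q (\<sigma> ` B1) B2 c"
    unfolding \<sigma>_def by (rule repr_count_image_add_mod_swap) (use B in \<open>auto simp: B1_def B2_def\<close>)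
  finally have A1B1: "repr_count q (A \<union> \<sigma> ` B2) B1 c = repr_count q A B1 c + repr_count q (\<sigma> ` B1) B2 c" .
  have "repr_count q (\<sigma> ` B1 \<union> (A - \<sigma> ` B1)) B2 c
      = repr_count q (\<sigma> ` B1) B2 c + repr_count q (A - \<sigma> ` B1) B2 c"
    using finA fin by (intro repr_count_Un_left) auto
  moreover have "\<sigma> ` B1 \<union> (A - \<sigma> ` B1) = A"
    by (auto simp: B1_def)
  ultimately have A0B2: "repr_count q A B2 c = repr_count q (\<sigma> ` B1) B2 c + repr_count q (A - \<sigma> ` B1) B2 c"
    by simp
  have "repr_count q (B1 \<union> B2) A c = repr_count q B1 A c + repr_count q B2 A c"
    using finA fin by (intro repr_count_Un_left) (auto simp: B1_def B2_def)
  moreover have "B1 \<union> B2 = B"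
    by (auto simp: B1_def B2_def)
  ultimately have "repr_count q A B c = repr_count q A B1 c + repr_count q A B2 c"
    by (simp add: repr_count_commute)
  then show ?thesis
    using A1B1 A0B2 by simp
qed

lemma add_mod_closed_eq_full:
  fixes q d :: nat
  assumes "coprime d q" "A \<subseteq> {..<q}" "a \<in> A" "\<And>x. x \<in> A \<Longrightarrow> (x + d) mod q \<in> A"
  shows "A = {..<q}"
proof -
  have multiples: "(a + k * d) mod q \<in> A" for k
  proof (induction k)
    case 0
    then show ?case using assms(2,3) by auto
  next
    case (Suc k)
    then have "((a + k * d) mod q + d) mod q \<in> A"
      by (rule assms(4))
    then show ?case
      unfolding mod_add_left_eq by (simp add: ac_simps)
  qed
  have "y \<in> A" if "y < q" for y
  proof -
    obtain k where "[d * k = y + q - a] (mod q)"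
      using cong_solve_dvd_nat[of d q] assms(1) by auto
    then have "[a + k * d = a + (y + q - a)] (mod q)"
      by (simp add: cong_add_lcancel_nat mult.commute)
    moreover have "a + (y + q - a) = y + q"
      using assms(2,3) by auto
    ultimately have "(a + k * d) mod q = y"
      using that by (simp add: cong_def)
    then show ?thesis
      using multiples by metis
  qed
  then show ?thesis
    using assms(2) by auto
qed

lemma exists_add_mod_splitting:
  fixes q :: nat
  assumes "prime q" "A \<subseteq> {..<q}" "A \<noteq> {}" "A \<noteq> {..<q}" "B \<subseteq> {..<q}" "2 \<le> card B"
  shows "\<exists>e. {b \<in> B. (b + e) mod q \<in> A} \<noteq> {} \<and> {b \<in> B. (b + e) mod q \<in> A} \<noteq> B"
proof (rule ccontr)
  assume no_split: "\<not> ?thesis"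
  have "finite B"
    using assms(6) card.infinite by fastforce
  with assms(6) obtain b0 b1 where b: "b0 \<in> B" "b1 \<in> B" "b0 \<noteq> b1"
    by (metis card_le_Suc0_iff_eq not_less_eq_eq numeral_2_eq_2)
  have bq: "b0 < q" "b1 < q"
    using b assms(5) by auto
  obtain a where "a \<in> A"
    using assms(3) by blast
  define d where "d = b1 + q - b0"
  have "\<not> q dvd d"
  proof
    assume "q dvd d"
    then have "[b1 + q = b0] (mod q)"
      using b assms(5) by (auto simp: d_def cong_altdef_nat)
    then show False
      using b bq by (simp add: cong_def)
  qed
  then have "coprime d q"
    using assms(1) prime_imp_coprime coprime_commute by blast
  moreover have "(x + d) mod q \<in> A" if "x \<in> A" for x
  proof -
    define e where "e = x + q - b0"
    have "x < q"
      using that assms(2) by auto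
    with bq have "(b0 + e) mod q = x"
      by (simp add: e_def)
    then have "{b \<in> B. (b + e) mod q \<in> A} = B"
      using no_split b(1) that by auto
    then have "(b1 + e) mod q \<in> A"
      using b(2) by blast
    moreover have "b1 + e = x + d"
      using bq by (simp add: e_def d_def)
    ultimately show ?thesis
      by simp
  qed
  ultimately have "A = {..<q}"
    using add_mod_closed_eq_full assms(2) \<open>a \<in> A\<close> by blast
  with assms(4) show False ..
qed

lemma exists_e_transform:
  fixes q :: nat
  assumes "prime q" "A \<subseteq> {..<q}" "B \<subseteq> {..<q}" "A \<noteq> {}" "A \<noteq> {..<q}" "2 \<le> card B"
  obtains A1 B1 A0 B2 where
    "A1 \<subseteq> {..<q}" "B1 \<subseteq> {..<q}" "A0 \<subseteq> {..<q}" "B2 \<subseteq> {..<q}"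
    "0 < card B1" "card B1 < card B"
    "card A1 + card B1 = card A + card B"
    "card A0 = card A - card B1" "card B2 = card B - card B1"
    "\<And>c. repr_count q A1 B1 c + repr_count q A0 B2 c = repr_count q A B c"
proof -
  obtain e where e: "{b \<in> B. (b + e) mod q \<in> A} \<noteq> {}" "{b \<in> B. (b + e) mod q \<in> A} \<noteq> B"
    using exists_add_mod_splitting assms by blast
  define \<sigma> where "\<sigma> = (\<lambda>x. (x + e) mod q)"
  define B1 where "B1 = {b \<in> B. \<sigma> b \<in> A}"
  define B2 where "B2 = {b \<in> B. \<sigma> b \<notin> A}"
  have "0 < q"
    using assms(1) prime_gt_0_nat by blast
  have finA: "finite A" and finB: "finite B"
    using assms(2,3) finite_subset by blast+
  have B12: "B1 \<subseteq> B" "B2 = B - B1" "B1 \<subseteq> {..<q}" "B2 \<subseteq> {..<q}"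
    using assms(3) by (auto simp: B1_def B2_def)
  have cardB1: "0 < card B1" "card B1 < card B"
    using e finB B12(1) by (auto simp: B1_def \<sigma>_def card_gt_0_iff intro: psubset_card_mono finite_subset)
  have finB1: "finite B1"
    using B12(1) finB finite_subset by blast
  have cardB2: "card B2 = card B - card B1"
    using B12 finB by (simp add: card_Diff_subset finite_subset)
  have card\<sigma>: "card (\<sigma> ` B1) = card B1" "card (\<sigma> ` B2) = card B2"
    using B12 card_image_add_mod unfolding \<sigma>_def by blast+
  have "card (A \<union> \<sigma> ` B2) = card A + card B2"
    using finA finB card\<sigma> by (subst card_Un_disjoint) (auto simp: B2_def)
  moreover have "card (A - \<sigma> ` B1) = card A - card B1"
    using finA finB1 card\<sigma> by (subst card_Diff_subset) (auto simp: B1_def)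
  moreover have "A \<union> \<sigma> ` B2 \<subseteq> {..<q}" "A - \<sigma> ` B1 \<subseteq> {..<q}"
    using assms(2) \<open>0 < q\<close> by (auto simp: \<sigma>_def)
  moreover have "repr_count q (A \<union> \<sigma> ` B2) B1 c + repr_count q (A - \<sigma> ` B1) B2 c = repr_count q A B c" for c
    unfolding \<sigma>_def B1_def B2_def using assms(2,3) by (rule repr_count_e_transform)
  ultimately show thesis
    using that[of "A \<union> \<sigma> ` B2" B1 "A - \<sigma> ` B1" B2] B12 cardB1 cardB2 by simp
qed

definition capped_repr_sum :: "nat \<Rightarrow> nat \<Rightarrow> nat set \<Rightarrow> nat set \<Rightarrow> nat" where
  "capped_repr_sum q t A B = (\<Sum>c<q. min (repr_count q A B c) t)"

lemma capped_repr_sum_full_left: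
  assumes "B \<subseteq> {..<q}" "t \<le> card B"
  shows "capped_repr_sum q t {..<q} B = q * t"
  unfolding capped_repr_sum_def using assms by (simp add: repr_count_full_left min_absorb2)

lemma capped_repr_sum_uncapped:
  assumes "0 < q" "A \<subseteq> {..<q}" "finite B" "card B \<le> t"
  shows "capped_repr_sum q t A B = card A * card B"
proof -
  have "min (repr_count q A B c) t = repr_count q A B c" for c
    using repr_count_le_card_right[OF assms(2,3)] assms(4) by (meson le_trans min_absorb1)
  moreover have "finite A"
    using assms(2) finite_subset by blast
  ultimately show ?thesis
    unfolding capped_repr_sum_def using assms sum_repr_count by simp
qed

lemma capped_repr_sum_mono:
  assumes "\<And>c. repr_count q A' B' c \<le> repr_count q A B c"
  shows "capped_repr_sum q t A' B' \<le> capped_repr_sum q t A B"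
  unfolding capped_repr_sum_def using assms by (intro sum_mono) (simp add: min.coboundedI1)

lemma capped_repr_sum_split:
  assumes "0 < q" "A1 \<subseteq> {..<q}" "finite B1" "card B1 \<le> t"
    and "\<And>c. repr_count q A1 B1 c + repr_count q A0 B2 c = repr_count q A B c"
  shows "card A1 * card B1 + capped_repr_sum q (t - card B1) A0 B2 \<le> capped_repr_sum q t A B"
proof -
  have "card A1 * card B1 + capped_repr_sum q (t - card B1) A0 B2
      = (\<Sum>c<q. repr_count q A1 B1 c + min (repr_count q A0 B2 c) (t - card B1))"
    using assms(1-3) finite_subset[OF assms(2)]
    by (simp add: sum.distrib capped_repr_sum_def sum_repr_count)
  also have "\<dots> \<le> capped_repr_sum q t A B"
    unfolding capped_repr_sum_def
  proof (rule sum_mono)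
    fix c
    have "repr_count q A1 B1 c \<le> card B1"
      using assms(2,3) by (rule repr_count_le_card_right)
    then show "repr_count q A1 B1 c + min (repr_count q A0 B2 c) (t - card B1) \<le> min (repr_count q A B c) t"
      using assms(4) assms(5)[of c] by linarith
  qed
  finally show ?thesis .
qed

lemma pollard_induction_step:
  fixes q :: nat
  assumes "prime q" "A \<subseteq> {..<q}" "B \<subseteq> {..<q}" "A \<noteq> {}" "A \<noteq> {..<q}" "2 \<le> card B"
    and "t \<le> card A" "t \<le> card B"
    and IH: "\<And>A' B' t'. card B' < card B \<Longrightarrow> A' \<subseteq> {..<q} \<Longrightarrow> B' \<subseteq> {..<q} \<Longrightarrow>
      t' \<le> card A' \<Longrightarrow> t' \<le> card B' \<Longrightarrow> t' * min q (card A' + card B' - t') \<le> capped_repr_sum q t' A' B'"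
  shows "t * min q (card A + card B - t) \<le> capped_repr_sum q t A B"
proof -
  obtain A1 B1 A0 B2 where transform:
    "A1 \<subseteq> {..<q}" "B1 \<subseteq> {..<q}" "A0 \<subseteq> {..<q}" "B2 \<subseteq> {..<q}"
    "0 < card B1" "card B1 < card B" "card A1 + card B1 = card A + card B"
    "card A0 = card A - card B1" "card B2 = card B - card B1"
    "\<And>c. repr_count q A1 B1 c + repr_count q A0 B2 c = repr_count q A B c"
    using exists_e_transform[OF assms(1-6)] by blast
  define s where "s = card B1"
  show ?thesis
  proof (cases "t \<le> s")
    case True
    have "t * min q (card A1 + card B1 - t) \<le> capped_repr_sum q t A1 B1"
      using transform True assms(7) by (intro IH) (auto simp: s_def)
    also have "\<dots> \<le> capped_repr_sum q t A B"
      using transform(10) le_add1 by (intro capped_repr_sum_mono) metis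
    finally show ?thesis
      using transform(7) by simp
  next
    case False
    have IH_A0_B2: "(t - s) * min q (card A0 + card B2 - (t - s)) \<le> capped_repr_sum q (t - s) A0 B2"
      using transform assms(7,8) by (intro IH) (auto simp: s_def)
    have "card A1 \<le> q"
      using card_mono[OF _ transform(1)] by simp
    define u w where "u = t - s" and "w = card A + card B - s - t"
    then have "t = s + u" "card A1 = t + w" "card A + card B - t = s + w"
      "card A0 + card B2 - (t - s) = w"
      using False assms(7,8) transform(7-9) by (auto simp: s_def)
    moreover have "min q (s + w) = s + w"
      using \<open>card A1 \<le> q\<close> calculation(1,2) by simp
    ultimately have "t * min q (card A + card B - t)
        = card A1 * s + (t - s) * min q (card A0 + card B2 - (t - s))"
      by (simp add: algebra_simps)
    also have "\<dots> \<le> card A1 * s + capped_repr_sum q (t - s) A0 B2"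
      using IH_A0_B2 by simp
    also have "\<dots> \<le> capped_repr_sum q t A B"
      using transform(1,2,10) False prime_gt_0_nat[OF assms(1)] unfolding s_def
      by (intro capped_repr_sum_split) (auto intro: finite_subset)
    finally show ?thesis .
  qed
qed

lemma pollard_capped_repr_sum:
  fixes q :: nat
  assumes "prime q"
  shows "A \<subseteq> {..<q} \<Longrightarrow> B \<subseteq> {..<q} \<Longrightarrow> t \<le> card A \<Longrightarrow> t \<le> card B \<Longrightarrow>
    t * min q (card A + card B - t) \<le> capped_repr_sum q t A B"
proof (induction "card B" arbitrary: A B t rule: less_induct)
  case less
  consider "t = 0" | "A = {..<q}" | "0 < t" "card B = 1" | "0 < t" "A \<noteq> {..<q}" "2 \<le> card B"
    using less.prems(4) by linarith
  then show ?case
  proof cases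
    case 1
    then show ?thesis
      by simp
  next
    case 2
    then show ?thesis
      using capped_repr_sum_full_left[OF less.prems(2,4)] by (simp add: mult.commute)
  next
    case 3
    have "finite B"
      using less.prems(2) finite_subset by blast
    then have "capped_repr_sum q t A B = card A * card B"
      using 3 prime_gt_0_nat[OF assms] less.prems(1) by (intro capped_repr_sum_uncapped) auto
    moreover have "t = 1"
      using 3 less.prems(4) by simp
    ultimately show ?thesis
      using 3 by simp
  next
    case 4
    then have "A \<noteq> {}"
      using less.prems(3) by auto
    show ?thesis
    proof (rule pollard_induction_step[OF assms less.prems(1,2) \<open>A \<noteq> {}\<close> 4(2,3) less.prems(3,4)])
      fix A' B' t'
      assume "card B' < card B" "A' \<subseteq> {..<q}" "B' \<subseteq> {..<q}" "t' \<le> card A'" "t' \<le> card B'"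
      then show "t' * min q (card A' + card B' - t') \<le> capped_repr_sum q t' A' B'"
        by (intro less.hyps) auto
    qed
  qed
qed

lemma sum_hits_pollard:
  fixes q :: nat
  assumes "prime q" "A \<subseteq> {..<q}" "B \<subseteq> {..<q}" "C \<subseteq> {..<q}" "t \<le> card A" "t \<le> card B"
  shows "sum_hits q A B C + t * min q (card A + card B - t) \<le> card A * card B + t * card C"
proof -
  let ?r = "repr_count q A B"
  have "0 < q"
    using assms(1) prime_gt_0_nat by blast
  have fin: "finite A" "finite B"
    using assms(2,3) finite_subset by blast+
  have "t * min q (card A + card B - t) \<le> capped_repr_sum q t A B"
    using pollard_capped_repr_sum assms by blast
  also have "\<dots> = (\<Sum>c\<in>C. min (?r c) t) + (\<Sum>c\<in>{..<q} - C. min (?r c) t)"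
    unfolding capped_repr_sum_def using assms(4) by (simp add: sum.subset_diff)
  also have "\<dots> \<le> (\<Sum>c\<in>C. t) + (\<Sum>c\<in>{..<q} - C. ?r c)"
    by (intro add_mono sum_mono) auto
  finally have "t * min q (card A + card B - t) \<le> t * card C + (\<Sum>c\<in>{..<q} - C. ?r c)"
    by (simp add: mult.commute)
  then show ?thesis
    using sum_hits_add_compl[OF \<open>0 < q\<close> fin assms(4)] by linarith
qed

text \<open>The two branches come from Pollard's bound with \<open>t = 2l - q\<close> and with \<open>t = \<lfloor>l/2\<rfloor>\<close>.\<close>

definition hits_deficit :: "nat \<Rightarrow> nat \<Rightarrow> nat" where
  "hits_deficit q l = (if 2 * q \<le> 3 * l then (2 * l - q) * (q - l) else l div 2 * (l - l div 2))"

lemma sum_hits_add_deficit_le: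
  fixes q :: nat
  assumes "prime q" "A \<subseteq> {..<q}" "B \<subseteq> {..<q}" "C \<subseteq> {..<q}"
    and "card A = l" "card B = l" "card C = l"
  shows "sum_hits q A B C + hits_deficit q l \<le> l * l"
proof -
  have "l \<le> q"
    using card_mono[OF _ assms(4)] assms(7) by simp
  have bound: "sum_hits q A B C + t * min q (2 * l - t) \<le> l * l + t * l" if "t \<le> l" for t
    using sum_hits_pollard[OF assms(1-4)] that assms(5-7) by (simp add: mult_2)
  show ?thesis
  proof (cases "2 * q \<le> 3 * l")
    case True
    define t where "t = 2 * l - q"
    have "t \<le> l" "2 * l - t = q"
      using True \<open>l \<le> q\<close> by (auto simp: t_def)
    then have "sum_hits q A B C + t * q \<le> l * l + t * l"
      using bound by fastforce
    moreover have "t * q = t * l + t * (q - l)"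
      using \<open>l \<le> q\<close> by (simp add: add_mult_distrib2[symmetric])
    ultimately show ?thesis
      using True by (simp add: hits_deficit_def t_def)
  next
    case False
    define k where "k = l div 2"
    have "k \<le> l" "2 * l - k \<le> q"
      using False by (auto simp: k_def)
    then have "sum_hits q A B C + k * (2 * l - k) \<le> l * l + k * l"
      using bound[of k] by simp
    moreover have "2 * l - k = l + (l - k)"
      using \<open>k \<le> l\<close> by simp
    then have "k * (2 * l - k) = k * l + k * (l - k)"
      by (simp add: add_mult_distrib2)
    ultimately show ?thesis
      using False by (simp add: hits_deficit_def k_def)
  qed
qed

section \<open>Extremal sets\<close>

lemma sum_hits_middle_interval:
  fixes q l :: nat
  defines "k \<equiv> l div 2"
  assumes "k + l \<le> q"
  shows "l * l \<le> sum_hits q {..<l} {..<l} {k..<k + l} + k * (l - k)"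
proof -
  define S where "S = {(a, b) \<in> {..<l} \<times> {..<l}. k \<le> a + b \<and> a + b < k + l}"
  define g where "g = (\<lambda>(x, y). if x + y < k then (x, y) else (x + (l - k), y + k))"
  \<comment> \<open>The strip \<open>S\<close> cuts two corner triangles off the square; \<open>g\<close> fits them together
    into a \<open>k \<times> (l - k)\<close> rectangle.\<close>
  have k: "k \<le> l - k" "l - k \<le> k + 1"
    unfolding k_def by auto
  have cover: "(a, b) \<in> S \<union> g ` ({..<k} \<times> {..<l - k})" if "a < l" "b < l" for a b
  proof -
    consider "a + b < k" | "k \<le> a + b \<and> a + b < k + l" | "k + l \<le> a + b"
      by linarith
    then show ?thesis
    proof cases
      case 1
      then show ?thesis
        using k by (intro UnI2 image_eqI[of _ _ "(a, b)"]) (auto simp: g_def)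
    next
      case 2
      then show ?thesis
        using that by (simp add: S_def)
    next
      case 3
      then show ?thesis
        using that k by (intro UnI2 image_eqI[of _ _ "(a - (l - k), b - k)"]) (auto simp: g_def)
    qed
  qed
  then have "{..<l} \<times> {..<l} \<subseteq> S \<union> g ` ({..<k} \<times> {..<l - k})"
    by auto
  moreover have "finite S"
    unfolding S_def by (rule finite_subset[of _ "{..<l} \<times> {..<l}"]) auto
  ultimately have "card ({..<l} \<times> {..<l}) \<le> card (S \<union> g ` ({..<k} \<times> {..<l - k}))"
    by (intro card_mono) auto
  also have "\<dots> \<le> card S + card (g ` ({..<k} \<times> {..<l - k}))"
    by (rule card_Un_le)
  also have "\<dots> \<le> card S + k * (l - k)"
    using card_image_le[of "{..<k} \<times> {..<l - k}" g] by (simp add: card_cartesian_product)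
  finally have "l * l \<le> card S + k * (l - k)"
    by (simp add: card_cartesian_product)
  moreover have "card S \<le> sum_hits q {..<l} {..<l} {k..<k + l}"
    unfolding sum_hits_def S_def using assms(2)
    by (intro card_mono) (auto intro: finite_subset[of _ "{..<l} \<times> {..<l}"])
  ultimately show ?thesis
    by linarith
qed

lemma repr_count_initial_segment_le:
  fixes q l c :: nat
  assumes "l \<le> q" "2 * q \<le> 3 * l" "c < q - l"
  shows "repr_count q {..<l} {..<l} c \<le> 2 * l - q"
proof -
  let ?F = "{(a, b) \<in> {..<l} \<times> {..<l}. (a + b) mod q = c}"
  have "b \<notin> {c<..c + (q - l)}" if "(a, b) \<in> ?F" for a b
  proof -
    have ab: "a < l" "b < l" "(a + b) mod q = c"
      using that by auto
    then have "(a + b) div q < 2"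
      using assms(1) by (simp add: less_mult_imp_div_less mult.commute)
    then have "(a + b) div q = 0 \<or> (a + b) div q = 1"
      by arith
    then have "a + b = c \<or> a + b = c + q"
      using ab(3) div_mult_mod_eq[of "a + b" q] by auto
    then show ?thesis
      using ab by auto
  qed
  then have "snd ` ?F \<subseteq> {..<l} - {c<..c + (q - l)}"
    by force
  then have "card (snd ` ?F) \<le> card ({..<l} - {c<..c + (q - l)})"
    by (intro card_mono) auto
  also have "\<dots> = 2 * l - q"
  proof -
    have "{c<..c + (q - l)} \<subseteq> {..<l}"
      using assms by auto
    then show ?thesis
      using assms(1) by (simp add: card_Diff_subset)
  qed
  finally show ?thesis
    unfolding repr_count_def using inj_on_snd_repr[of "{..<l}" q "{..<l}" c] assms(1)
    by (simp add: card_image)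
qed

lemma sum_hits_top_interval:
  fixes q l :: nat
  assumes "0 < q" "l \<le> q" "2 * q \<le> 3 * l"
  shows "l * l \<le> sum_hits q {..<l} {..<l} {q - l..<q} + (q - l) * (2 * l - q)"
proof -
  have "{q - l..<q} \<subseteq> {..<q}" "{..<q} - {q - l..<q} = {..<q - l}"
    by auto
  then have "sum_hits q {..<l} {..<l} {q - l..<q} + (\<Sum>c<q - l. repr_count q {..<l} {..<l} c) = l * l"
    using sum_hits_add_compl[OF assms(1), of "{..<l}" "{..<l}" "{q - l..<q}"] by simp
  moreover have "(\<Sum>c<q - l. repr_count q {..<l} {..<l} c) \<le> (\<Sum>c<q - l. 2 * l - q)"
    using repr_count_initial_segment_le assms(2,3) by (intro sum_mono) auto
  ultimately show ?thesis
    by simp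
qed

lemma hits_deficit_attained:
  fixes q l :: nat
  assumes "0 < l" "l \<le> q"
  obtains C where "C \<subseteq> {..<q}" "card C = l" "l * l \<le> sum_hits q {..<l} {..<l} C + hits_deficit q l"
proof (cases "2 * q \<le> 3 * l")
  case True
  show thesis
  proof (rule that)
    show "{q - l..<q} \<subseteq> {..<q}" "card {q - l..<q} = l"
      using assms by auto
    show "l * l \<le> sum_hits q {..<l} {..<l} {q - l..<q} + hits_deficit q l"
      using sum_hits_top_interval[of q l] True assms by (simp add: hits_deficit_def mult.commute)
  qed
next
  case False
  show thesis
  proof (rule that)
    show "{l div 2..<l div 2 + l} \<subseteq> {..<q}" "card {l div 2..<l div 2 + l} = l"
      using False by auto
    show "l * l \<le> sum_hits q {..<l} {..<l} {l div 2..<l div 2 + l} + hits_deficit q l"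
      using sum_hits_middle_interval[of l q] False by (simp add: hits_deficit_def)
  qed
qed

lemma pair_pmf_of_set:
  assumes "finite A" "A \<noteq> {}" "finite B" "B \<noteq> {}"
  shows "pair_pmf (pmf_of_set A) (pmf_of_set B) = pmf_of_set (A \<times> B)"
proof (rule pmf_eqI)
  fix x :: "'a \<times> 'b"
  show "pmf (pair_pmf (pmf_of_set A) (pmf_of_set B)) x = pmf (pmf_of_set (A \<times> B)) x"
    using assms by (cases x) (simp add: pmf_pair card_cartesian_product indicator_def)
qed

lemma sum_in_prob_eq_sum_hits:
  assumes "finite T1" "T1 \<noteq> {}" "finite T2" "T2 \<noteq> {}"
  shows "sum_in_prob q T1 T2 T3 = sum_hits q T1 T2 T3 / (card T1 * card T2)"
proof -
  have "(T1 \<times> T2) \<inter> {(x1, x2). (x1 + x2) mod q \<in> T3} = {(a, b) \<in> T1 \<times> T2. (a + b) mod q \<in> T3}"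
    by auto
  then show ?thesis
    unfolding sum_in_prob_def sum_hits_def pair_pmf_of_set[OF assms]
    using assms by (simp add: measure_pmf_of_set card_cartesian_product)
qed

lemma sumset_bound_small:
  assumes "3 * l \<le> 2 * q + 1"
  shows "sumset_bound q l = (if odd l then 3/4 + 1 / (4 * (real l)^2) else 3/4)"
proof -
  have "max 0 (3 * int l - 2 * int q - 1) = 0"
    using assms by simp
  moreover have "even l \<Longrightarrow> max 0 (3 * int l - 2 * int q) = 0"
    using assms by presburger
  ultimately show ?thesis
    unfolding sumset_bound_def Let_def by simp
qed

lemma sumset_bound_large:
  assumes "0 < l" "2 * q \<le> 3 * l"
  shows "sumset_bound q l = ((real q)^2 - 3 * real l * (real q - real l)) / (real l)^2"
proof (cases "odd l")
  case True
  then have "max 0 (3 * int l - 2 * int q - 1) = 3 * int l - 2 * int q - 1"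
    using assms(2) by presburger
  then show ?thesis
    unfolding sumset_bound_def Let_def using True assms(1)
    by (simp add: field_simps power2_eq_square)
next
  case False
  then have "max 0 (3 * int l - 2 * int q) = 3 * int l - 2 * int q"
    using assms(2) by simp
  then show ?thesis
    unfolding sumset_bound_def Let_def using False assms(1)
    by (simp add: field_simps power2_eq_square)
qed

lemma sumset_bound_eq_deficit:
  assumes "0 < l" "l \<le> q"
  shows "sumset_bound q l = (real (l * l) - real (hits_deficit q l)) / real (l * l)"
proof (cases "2 * q \<le> 3 * l")
  case True
  then have "real (hits_deficit q l) = (2 * real l - real q) * (real q - real l)"
    using assms(2) by (simp add: hits_deficit_def of_nat_diff)
  then show ?thesis
    using sumset_bound_large[OF assms(1) True] assms(1)
    by (simp add: field_simps power2_eq_square)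
next
  case False
  define k where "k = l div 2"
  have "l = 2 * k \<or> l = 2 * k + 1"
    unfolding k_def by auto
  moreover have "real (hits_deficit q l) = real k * (real l - real k)"
    using False by (simp add: hits_deficit_def k_def of_nat_diff)
  ultimately show ?thesis
    using sumset_bound_small[of l q] False assms(1)
    by (auto simp: field_simps power2_eq_square)
qed

lemma sum_in_prob_le_sumset_bound:
  fixes q :: nat
  assumes "prime q" "0 < l" "T1 \<subseteq> {..<q}" "T2 \<subseteq> {..<q}" "T3 \<subseteq> {..<q}"
    and "card T1 = l" "card T2 = l" "card T3 = l"
  shows "sum_in_prob q T1 T2 T3 \<le> sumset_bound q l"
proof -
  have "finite T1" "finite T2" "T1 \<noteq> {}" "T2 \<noteq> {}" "l \<le> q"
    using assms(2-8) finite_subset card_mono[OF _ assms(3)] by fastforce+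
  then have "sum_in_prob q T1 T2 T3 = sum_hits q T1 T2 T3 / real (l * l)"
    using sum_in_prob_eq_sum_hits assms(6,7) by simp
  also have "\<dots> \<le> (real (l * l) - real (hits_deficit q l)) / real (l * l)"
    using sum_hits_add_deficit_le[OF assms(1,3-8)]
    by (intro divide_right_mono) (simp_all add: le_diff_eq del: of_nat_mult flip: of_nat_add)
  finally show ?thesis
    using sumset_bound_eq_deficit[OF assms(2) \<open>l \<le> q\<close>] by simp
qed

lemma sumset_bound_attained:
  fixes q :: nat
  assumes "prime q" "0 < l" "l \<le> q"
  obtains T3 where "T3 \<subseteq> {..<q}" "card T3 = l" "sum_in_prob q {..<l} {..<l} T3 = sumset_bound q l"
proof -
  obtain T3 where T3: "T3 \<subseteq> {..<q}" "card T3 = l"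
    and hits: "l * l \<le> sum_hits q {..<l} {..<l} T3 + hits_deficit q l"
    using hits_deficit_attained[OF assms(2,3)] by blast
  have initial: "{..<l} \<subseteq> {..<q}" "card {..<l} = l"
    using assms(3) by auto
  have "sumset_bound q l \<le> sum_hits q {..<l} {..<l} T3 / real (l * l)"
    unfolding sumset_bound_eq_deficit[OF assms(2,3)] using hits
    by (intro divide_right_mono) (simp_all add: diff_le_eq del: of_nat_mult flip: of_nat_add)
  also have "\<dots> = sum_in_prob q {..<l} {..<l} T3"
    using sum_in_prob_eq_sum_hits[of "{..<l}" "{..<l}"] assms(2) by (simp add: lessThan_empty_iff)
  finally have "sumset_bound q l \<le> sum_in_prob q {..<l} {..<l} T3" .
  moreover have "sum_in_prob q {..<l} {..<l} T3 \<le> sumset_bound q l"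
    using sum_in_prob_le_sumset_bound[OF assms(1,2) initial(1) initial(1) T3(1)] initial T3 by simp
  ultimately show thesis
    using that T3 by simp
qed

theorem lemma3p2:
  fixes q :: nat
  assumes "prime q" and "q \<ge> 3"
  shows
    "(\<forall>l T1 T2 T3. l > 0 \<and> T1 \<subseteq> {..<q} \<and> T2 \<subseteq> {..<q} \<and> T3 \<subseteq> {..<q}
        \<and> card T1 = l \<and> card T2 = l \<and> card T3 = l
        \<longrightarrow> sum_in_prob q T1 T2 T3 \<le> sumset_bound q l)
   \<and> (\<forall>l. 0 < l \<and> l \<le> q \<longrightarrow>
        (\<exists>T1 T2 T3. T1 \<subseteq> {..<q} \<and> T2 \<subseteq> {..<q} \<and> T3 \<subseteq> {..<q}
          \<and> card T1 = l \<and> card T2 = l \<and> card T3 = l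
          \<and> sum_in_prob q T1 T2 T3 = sumset_bound q l))
   \<and> (\<forall>l T1 T2 T3. l > 0 \<and> T1 \<subseteq> {..<q} \<and> T2 \<subseteq> {..<q} \<and> T3 \<subseteq> {..<q}
        \<and> card T1 = l \<and> card T2 = l \<and> card T3 = l \<and> 3 * real l \<le> 2 * real q
        \<longrightarrow> sum_in_prob q T1 T2 T3 \<le>
              (if odd l then 3/4 + 1 / (4 * (real l)^2) else 3/4))
   \<and> (\<forall>l T1 T2 T3. l > 0 \<and> T1 \<subseteq> {..<q} \<and> T2 \<subseteq> {..<q} \<and> T3 \<subseteq> {..<q}
        \<and> card T1 = l \<and> card T2 = l \<and> card T3 = l
        \<and> 2 * real q < 3 * real l \<and> l \<le> q - 1
        \<longrightarrow> sum_in_prob q T1 T2 T3 \<le>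
              ((real q)^2 - 3 * real l * (real q - real l)) / (real l)^2)"
proof -
  have upper: "sum_in_prob q T1 T2 T3 \<le> sumset_bound q l"
    if "0 < l" "T1 \<subseteq> {..<q}" "T2 \<subseteq> {..<q}" "T3 \<subseteq> {..<q}" "card T1 = l" "card T2 = l" "card T3 = l"
    for l T1 T2 T3
    using sum_in_prob_le_sumset_bound[OF assms(1) that] .
  have tight: "\<exists>T1 T2 T3. T1 \<subseteq> {..<q} \<and> T2 \<subseteq> {..<q} \<and> T3 \<subseteq> {..<q}
      \<and> card T1 = l \<and> card T2 = l \<and> card T3 = l \<and> sum_in_prob q T1 T2 T3 = sumset_bound q l"
    if l: "0 < l" "l \<le> q" for l
  proof -
    obtain T3 where "T3 \<subseteq> {..<q}" "card T3 = l" "sum_in_prob q {..<l} {..<l} T3 = sumset_bound q l"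
      using sumset_bound_attained[OF assms(1) l] .
    then show ?thesis
      using l(2) by (intro exI[of _ "{..<l}"] exI[of _ T3]) auto
  qed
  have "sumset_bound q l = (if odd l then 3/4 + 1 / (4 * (real l)^2) else 3/4)"
    if "3 * real l \<le> 2 * real q" for l
    using that by (intro sumset_bound_small) linarith
  moreover have "sumset_bound q l = ((real q)^2 - 3 * real l * (real q - real l)) / (real l)^2"
    if "0 < l" "2 * real q < 3 * real l" for l
    using that by (intro sumset_bound_large) linarith+
  ultimately show ?thesis
    using upper tight by (smt (verit))
qed

end
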